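(* Let $r \ge 2$ be an integer. For every integer $k \ge 2$ there exist constants $c > 0$ and $d > 0$ such that for every function $m = m(n)$ with $cn \le m \le d n^{2 - 2/(r+2)}$, \[ \frac{|\mathcal{F}_{n,m}(K_{r+1})|}{|\mathcal{G}_{n,m}(k)|} \to \infty \quad \text{as } n \to \infty. \]
   Context: $\mathcal{F}_{n,m}(K_{r+1})$ is the family of all $K_{r+1}$-free graphs on vertex set $[n]$ with exactly $m$ edges; $\mathcal{G}_{n,m}(k)$ is the family of all $k$-colorable graphs on vertex set $[n]$ with exactly $m$ edges. *)

theory Defs
  imports Complex_Main
begin

definition graphs_on :: "nat \<Rightarrow> nat set set set" where
  "graphs_on n = {E. \<forall>e\<in>E. e \<subseteq> {1..n} \<and> card e = 2}"

definition has_clique :: "nat set set \<Rightarrow> nat \<Rightarrow> bool" where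
  "has_clique E s = (\<exists>S. finite S \<and> card S = s \<and> (\<forall>x\<in>S. \<forall>y\<in>S. x \<noteq> y \<longrightarrow> {x, y} \<in> E))"

definition colorable :: "nat \<Rightarrow> nat set set \<Rightarrow> nat \<Rightarrow> bool" where
  "colorable n E k = (\<exists>f. (\<forall>v\<in>{1..n}. f v < k) \<and> (\<forall>x y. {x, y} \<in> E \<longrightarrow> f x \<noteq> (f y :: nat)))"

definition Kfree_family :: "nat \<Rightarrow> nat \<Rightarrow> nat \<Rightarrow> nat set set set" where
  "Kfree_family n m r = {E \<in> graphs_on n. card E = m \<and> \<not> has_clique E (r + 1)}"

definition colorable_family :: "nat \<Rightarrow> nat \<Rightarrow> nat \<Rightarrow> nat set set set" where
  "colorable_family n m k = {E \<in> graphs_on n. card E = m \<and> colorable n E k}"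

end

theory Submission
  imports Defs
begin

text \<open>Write \<open>N = n choose 2\<close>. A \<open>k\<close>-colourable graph has no edge inside some colour class of
  size at least \<open>n / k\<close>, and such a class spans a \<open>1 / (2 k^2)\<close> fraction of all pairs; summing over
  the at most \<open>2^n\<close> candidate classes gives \<open>|G(n, m, k)| \<le> 2^n (N choose m) (1 - 1 / (2 k^2))^m\<close>.

  For \<open>K_(r+1)\<close>-free graphs we use the deletion method with \<open>L = m div q\<close> extra edges: as
  \<open>m \<le> d n^(2 - 2/(r+2))\<close>, a graph with \<open>m + L\<close> edges contains on average at most \<open>(L + 1) / 2\<close>
  copies of \<open>K_(r+1)\<close>, and removing one edge from each copy shows
  \<open>(N choose m) \<le> 2 |F(n, m, K_(r+1))| ((m + L) choose L)\<close>.

  The loss \<open>((m + L) choose L) \<le> exp (m / (4 k^2))\<close> is beaten by the gain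
  \<open>(1 - 1 / (2 k^2))^m \<le> exp (- m / (2 k^2))\<close>, with room to spare for \<open>2^n\<close> and a factor \<open>n\<close>
  once \<open>m \<ge> 12 k^2 n\<close>.\<close>

section \<open>Binomial estimates\<close>

lemma real_choose_two: "real (a choose 2) = real a * (real a - 1) / 2"
proof (cases a)
  case (Suc b)
  then have "2 * (a choose 2) = a * (a - 1)" by (simp add: choose_two)
  then have "2 * real (a choose 2) = real a * real (a - 1)" by (metis of_nat_mult of_nat_numeral)
  with Suc show ?thesis by simp
qed simp

lemma choose_two_ge_quarter_square: "2 \<le> n \<Longrightarrow> real n ^ 2 / 4 \<le> real (n choose 2)"
  unfolding real_choose_two by (simp add: power2_eq_square field_simps)

lemma binomial_mult_power_le:
  assumes AN: "A \<le> N"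
  shows "real (A choose m) * real N ^ m \<le> real (N choose m) * real A ^ m"
proof (cases "m \<le> A")
  case True
  have "real (A choose m) * real N ^ m = (\<Prod>i<m. real (A - i) / real (m - i)) * (\<Prod>i<m. real N)"
    using True by (simp add: binomial_altdef_of_nat atLeast0LessThan)
  also have "\<dots> \<le> (\<Prod>i<m. real (N - i) / real (m - i)) * (\<Prod>i<m. real A)"
    unfolding prod.distrib[symmetric]
  proof (rule prod_mono)
    fix i assume "i \<in> {..<m}"
    then have "real (A - i) * real N \<le> real (N - i) * real A"
      using True AN by (simp add: of_nat_diff algebra_simps mult_right_mono)
    then show "0 \<le> real (A - i) / real (m - i) * real N \<and>
               real (A - i) / real (m - i) * real N \<le> real (N - i) / real (m - i) * real A"
      by (simp add: divide_right_mono)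
  qed
  also have "\<dots> = real (N choose m) * real A ^ m"
    using True AN by (simp add: binomial_altdef_of_nat atLeast0LessThan)
  finally show ?thesis .
qed (simp add: binomial_eq_0)

lemma binomial_le_power_ratio:
  assumes AN: "A \<le> N" and N: "0 < N" and A: "real A \<le> \<beta> * real N"
  shows "real (A choose m) \<le> real (N choose m) * \<beta> ^ m"
proof -
  have "real (A choose m) * real N ^ m \<le> real (N choose m) * real A ^ m"
    using AN by (rule binomial_mult_power_le)
  also have "\<dots> \<le> real (N choose m) * (\<beta> * real N) ^ m"
    by (intro mult_left_mono power_mono A) auto
  finally show ?thesis using N by (simp add: power_mult_distrib)
qed

lemma binomial_supersets_le:
  assumes sM: "s \<le> M" and MN: "M \<le> N" and N: "0 < N"
  shows "real ((N - s) choose (M - s)) \<le> real (N choose M) * (real M / real N) ^ s"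
proof -
  have "(N choose M) * (M choose s) = (N choose s) * ((N - s) choose (M - s))"
    using sM MN by (rule choose_mult)
  then have "real ((N - s) choose (M - s)) * real (N choose s) * real N ^ s
               = real (N choose M) * (real (M choose s) * real N ^ s)"
    by (simp add: algebra_simps flip: of_nat_mult)
  also have "\<dots> \<le> real (N choose M) * (real (N choose s) * real M ^ s)"
    using MN by (intro mult_left_mono binomial_mult_power_le) auto
  finally have "real ((N - s) choose (M - s)) * real N ^ s \<le> real (N choose M) * real M ^ s"
    using sM MN by (simp add: ac_simps)
  then show ?thesis using N by (simp add: power_divide field_simps)
qed

lemma choose_le_of_choose_add_le:
  assumes mL: "m + L \<le> N" and le: "N choose (m + L) \<le> X * ((N - m) choose L)"
  shows "N choose m \<le> X * ((m + L) choose L)"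
proof -
  have Y: "0 < (N - m) choose L" using mL by simp
  have "(N choose m) * ((N - m) choose L) = (N choose (m + L)) * ((m + L) choose L)"
    using choose_mult[of m "m + L" N] mL binomial_symmetric[of m "m + L"] by simp
  also have "\<dots> \<le> X * ((N - m) choose L) * ((m + L) choose L)"
    using le by (rule mult_le_mono1)
  also have "\<dots> = X * ((m + L) choose L) * ((N - m) choose L)" by (simp add: ac_simps)
  finally show ?thesis using Y by simp
qed

lemma power_div_fact_le_exp: "real L ^ L / fact L \<le> exp (real L)"
proof -
  have exp: "(\<lambda>j. real L ^ j / fact j) sums exp (real L)"
    using exp_converges[of "real L"] by (simp add: divide_inverse_commute scaleR_conv_of_real)
  have "(\<Sum>j\<in>{L}. real L ^ j / fact j) \<le> (\<Sum>j. real L ^ j / fact j)"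
    by (rule sum_le_suminf) (use exp sums_summable in auto)
  then show ?thesis using sums_unique[OF exp] by simp
qed

lemma binomial_le_exp_mult_power:
  assumes M: "real M \<le> B * real L"
  shows "real (M choose L) \<le> (exp 1 * B) ^ L"
proof (cases "L = 0")
  case False
  have "0 \<le> B * real L" using M by (meson of_nat_0_le_iff order_trans)
  with False have B: "0 \<le> B" by (simp add: zero_le_mult_iff)
  have "real (M choose L) \<le> real M ^ L / fact L"
    using binomial_fact_pow[of M L] by (simp add: field_simps) (metis of_nat_fact of_nat_le_iff of_nat_mult of_nat_power)
  also have "\<dots> \<le> (B * real L) ^ L / fact L"
    by (intro divide_right_mono power_mono M) auto
  also have "\<dots> = B ^ L * (real L ^ L / fact L)" by (simp add: power_mult_distrib)
  also have "\<dots> \<le> B ^ L * exp (real L)"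
    using B by (intro mult_left_mono power_div_fact_le_exp) auto
  also have "\<dots> = (exp 1 * B) ^ L"
    by (simp add: power_mult_distrib exp_of_nat_mult[symmetric] mult.commute)
  finally show ?thesis .
qed simp

section \<open>Sets avoiding a family of subsets\<close>

lemma card_supersets_with_card:
  assumes P: "finite P" and AP: "A \<subseteq> P" and Aj: "card A \<le> j"
  shows "card {H. H \<subseteq> P \<and> card H = j \<and> A \<subseteq> H} = (card P - card A) choose (j - card A)"
proof -
  have A: "finite A" using P AP finite_subset by blast
  have "bij_betw (\<lambda>H. H - A) {H. H \<subseteq> P \<and> card H = j \<and> A \<subseteq> H} {G. G \<subseteq> P - A \<and> card G = j - card A}"
  proof (rule bij_betw_byWitness[where f'="\<lambda>G. G \<union> A"])
    show "(\<lambda>G. G \<union> A) ` {G. G \<subseteq> P - A \<and> card G = j - card A} \<subseteq> {H. H \<subseteq> P \<and> card H = j \<and> A \<subseteq> H}"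
    proof clarsimp
      fix G assume G: "G \<subseteq> P - A" "card G = j - card A"
      then have "finite G" "G \<inter> A = {}" using P finite_subset by blast+
      with G show "G \<subseteq> P \<and> A \<subseteq> P \<and> card (G \<union> A) = j"
        using AP Aj A by (auto simp: card_Un_disjoint)
    qed
  qed (use P A in \<open>auto simp: card_Diff_subset intro: finite_subset\<close>)
  then have "card {H. H \<subseteq> P \<and> card H = j \<and> A \<subseteq> H} = card {G. G \<subseteq> P - A \<and> card G = j - card A}"
    by (rule bij_betw_same_card)
  also have "\<dots> = (card P - card A) choose (j - card A)"
    using P AP A by (simp add: n_subsets card_Diff_subset)
  finally show ?thesis .
qed

lemma exists_subset_avoiding:
  assumes H: "finite H" and B: "finite B" "m + card B \<le> card H"
    and nonempty: "\<And>K. K \<in> B \<Longrightarrow> K \<noteq> {}"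
  obtains F where "F \<subseteq> H" "card F = m" "\<forall>K\<in>B. \<not> K \<subseteq> F"
proof -
  define pick where "pick K = (SOME x. x \<in> K)" for K :: "'a set"
  have pick: "pick K \<in> K" if "K \<in> B" for K
    using nonempty[OF that] unfolding pick_def by (simp add: some_in_eq)
  have "card (pick ` B) \<le> card B" using B(1) by (rule card_image_le)
  then have "m \<le> card (H - pick ` B)"
    using B H diff_card_le_card_Diff[of "pick ` B" H] by simp
  then obtain F where F: "F \<subseteq> H - pick ` B" "card F = m" by (meson obtain_subset_with_card_n)
  have "\<not> K \<subseteq> F" if "K \<in> B" for K using F(1) pick[OF that] that by blast
  with F that show thesis by blast
qed

lemma card_sets_containing_many_members:
  assumes P: "finite P" and Ks: "\<And>K. K \<in> Ks \<Longrightarrow> K \<subseteq> P \<and> card K = s" and sj: "s \<le> j"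
  shows "(L + 1) * card {H. H \<subseteq> P \<and> card H = j \<and> L < card {K\<in>Ks. K \<subseteq> H}}
           \<le> card Ks * ((card P - s) choose (j - s))"
proof -
  define Gr where "Gr = {H. H \<subseteq> P \<and> card H = j}"
  define Many where "Many = {H\<in>Gr. L < card {K\<in>Ks. K \<subseteq> H}}"
  have Ks_fin: "finite Ks" using Ks P by (meson PowI finite_Pow_iff finite_subset subsetI)
  have Gr_fin: "finite Gr" unfolding Gr_def using P by auto
  have "(L + 1) * card Many = (\<Sum>H\<in>Many. L + 1)" by simp
  also have "\<dots> \<le> (\<Sum>H\<in>Many. card {K\<in>Ks. K \<subseteq> H})"
    by (rule sum_mono) (auto simp: Many_def)
  also have "\<dots> \<le> (\<Sum>H\<in>Gr. card {K\<in>Ks. K \<subseteq> H})"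
    by (rule sum_mono2[OF Gr_fin]) (auto simp: Many_def)
  also have "\<dots> = (\<Sum>H\<in>Gr. \<Sum>K\<in>Ks. if K \<subseteq> H then 1 else 0)"
    using Ks_fin by (simp add: sum.If_cases Int_def)
  also have "\<dots> = (\<Sum>K\<in>Ks. \<Sum>H\<in>Gr. if K \<subseteq> H then 1 else 0)" by (rule sum.swap)
  also have "\<dots> = (\<Sum>K\<in>Ks. card {H. H \<subseteq> P \<and> card H = j \<and> K \<subseteq> H})"
    using Gr_fin by (simp add: sum.If_cases Int_def Gr_def conj_assoc)
  also have "\<dots> = card Ks * ((card P - s) choose (j - s))"
    using card_supersets_with_card[OF P] Ks sj by simp
  finally show ?thesis unfolding Many_def Gr_def by (simp add: conj_assoc)
qed

text \<open>The deletion method: if a random \<open>(m + L)\<close>-subset of \<open>P\<close> contains on average at most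
  \<open>(L + 1) / 2\<close> members of \<open>Ks\<close>, then by Markov's inequality at least half of these subsets contain
  at most \<open>L\<close> of them; removing one point from each yields a \<open>Ks\<close>-free \<open>m\<close>-subset, and each
  \<open>m\<close>-subset arises from at most \<open>(card P - m) choose L\<close> of the \<open>(m + L)\<close>-subsets.\<close>

lemma choose_le_card_subsets_avoiding:
  assumes P: "finite P" and Ks: "\<And>K. K \<in> Ks \<Longrightarrow> K \<subseteq> P \<and> card K = s"
    and s: "1 \<le> s" "s \<le> m + L"
    and markov: "2 * card Ks * ((card P - s) choose (m + L - s)) \<le> (L + 1) * (card P choose (m + L))"
  shows "card P choose (m + L)
           \<le> 2 * card {F. F \<subseteq> P \<and> card F = m \<and> (\<forall>K\<in>Ks. \<not> K \<subseteq> F)} * ((card P - m) choose L)"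
proof -
  define Gr where "Gr = {H. H \<subseteq> P \<and> card H = m + L}"
  define Many where "Many = {H\<in>Gr. L < card {K\<in>Ks. K \<subseteq> H}}"
  define Free where "Free = {F. F \<subseteq> P \<and> card F = m \<and> (\<forall>K\<in>Ks. \<not> K \<subseteq> F)}"
  have Ks_fin: "finite Ks" using Ks P by (meson PowI finite_Pow_iff finite_subset subsetI)
  have Gr_fin: "finite Gr" unfolding Gr_def using P by auto
  have card_Gr: "card Gr = card P choose (m + L)" unfolding Gr_def using P by (simp add: n_subsets)
  have "(L + 1) * card Many \<le> card Ks * ((card P - s) choose (m + L - s))"
    using card_sets_containing_many_members[OF P Ks s(2)] unfolding Many_def Gr_def
    by (simp add: conj_assoc)
  then have "(L + 1) * (2 * card Many) \<le> (L + 1) * card Gr"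
    using markov card_Gr by (simp add: mult.left_commute)
  then have Many: "2 * card Many \<le> card Gr"
    using mult_le_cancel1[of "L + 1" "2 * card Many" "card Gr"] by simp
  have "\<exists>F\<in>Free. F \<subseteq> H" if H: "H \<in> Gr - Many" for H
  proof -
    have "finite H" "card H = m + L" using H P finite_subset unfolding Gr_def by auto
    moreover have "finite {K\<in>Ks. K \<subseteq> H}" "card {K\<in>Ks. K \<subseteq> H} \<le> L"
      using Ks_fin H unfolding Many_def by auto
    moreover have "K \<noteq> {}" if "K \<in> {K\<in>Ks. K \<subseteq> H}" for K using Ks that s(1) by fastforce
    ultimately obtain F where F: "F \<subseteq> H" "card F = m" "\<forall>K\<in>{K\<in>Ks. K \<subseteq> H}. \<not> K \<subseteq> F"
      by (metis (lifting) add_le_cancel_left exists_subset_avoiding)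
    then have "F \<in> Free" using H unfolding Free_def Gr_def by blast
    with F show ?thesis by blast
  qed
  then have "Gr - Many \<subseteq> (\<Union>F\<in>Free. {H\<in>Gr. F \<subseteq> H})" by blast
  moreover have "finite (\<Union>F\<in>Free. {H\<in>Gr. F \<subseteq> H})"
    by (rule finite_subset[of _ Gr]) (use Gr_fin in auto)
  ultimately have "card (Gr - Many) \<le> card (\<Union>F\<in>Free. {H\<in>Gr. F \<subseteq> H})"
    by (simp add: card_mono)
  also have "\<dots> \<le> (\<Sum>F\<in>Free. card {H\<in>Gr. F \<subseteq> H})"
    using P by (intro card_UN_le) (simp add: Free_def)
  also have "\<dots> = (\<Sum>F\<in>Free. (card P - m) choose L)"
  proof (rule sum.cong[OF refl])
    fix F assume "F \<in> Free"
    then have "F \<subseteq> P" "card F = m" by (auto simp: Free_def)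
    then show "card {H\<in>Gr. F \<subseteq> H} = (card P - m) choose L"
      using card_supersets_with_card[OF P, of F "m + L"] unfolding Gr_def by (simp add: conj_assoc)
  qed
  finally have "card (Gr - Many) \<le> card Free * ((card P - m) choose L)" by simp
  moreover have "card Gr - card Many \<le> card (Gr - Many)"
    using Gr_fin by (intro diff_card_le_card_Diff) (simp add: Many_def)
  ultimately show ?thesis using Many card_Gr unfolding Free_def by linarith
qed

section \<open>Graphs as sets of pairs\<close>

definition pairs :: "'a set \<Rightarrow> 'a set set" where
  "pairs S = {e. e \<subseteq> S \<and> card e = 2}"

lemma finite_pairs: "finite S \<Longrightarrow> finite (pairs S)"
  unfolding pairs_def by simp

lemma card_pairs: "finite S \<Longrightarrow> card (pairs S) = card S choose 2"
  unfolding pairs_def by (rule n_subsets)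

lemma pairs_mono: "S \<subseteq> T \<Longrightarrow> pairs S \<subseteq> pairs T"
  unfolding pairs_def by auto

lemma doubleton_in_pairs: "x \<in> S \<Longrightarrow> y \<in> S \<Longrightarrow> x \<noteq> y \<Longrightarrow> {x, y} \<in> pairs S"
  unfolding pairs_def by auto

lemma pairs_subset_iff: "pairs S \<subseteq> E \<longleftrightarrow> (\<forall>x\<in>S. \<forall>y\<in>S. x \<noteq> y \<longrightarrow> {x, y} \<in> E)"
proof
  assume "pairs S \<subseteq> E"
  then show "\<forall>x\<in>S. \<forall>y\<in>S. x \<noteq> y \<longrightarrow> {x, y} \<in> E" by (meson doubleton_in_pairs subsetD)
next
  assume E: "\<forall>x\<in>S. \<forall>y\<in>S. x \<noteq> y \<longrightarrow> {x, y} \<in> E"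
  show "pairs S \<subseteq> E"
  proof
    fix e assume "e \<in> pairs S"
    then obtain x y where "e = {x, y}" "x \<noteq> y" "x \<in> S" "y \<in> S"
      unfolding pairs_def card_2_iff by auto
    with E show "e \<in> E" by blast
  qed
qed

lemma graphs_on_iff_subset_pairs: "E \<in> graphs_on n \<longleftrightarrow> E \<subseteq> pairs {1..n}"
  unfolding graphs_on_def pairs_def by auto

lemma has_clique_imp_pairs_subset:
  assumes E: "E \<subseteq> pairs {1..n}" and clique: "has_clique E (r + 1)" and r: "1 \<le> r"
  obtains S where "S \<subseteq> {1..n}" "card S = r + 1" "pairs S \<subseteq> E"
proof -
  obtain S where S: "finite S" "card S = r + 1" and SE: "pairs S \<subseteq> E"
    using clique unfolding has_clique_def pairs_subset_iff by blast
  have "x \<in> {1..n}" if x: "x \<in> S" for x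
  proof -
    have "S - {x} \<noteq> {}" using S x r by (metis card_Diff_singleton add_diff_cancel_right' card.empty not_one_le_zero)
    then obtain y where "y \<in> S" "y \<noteq> x" by blast
    then have "{x, y} \<in> pairs {1..n}" using SE E x doubleton_in_pairs[of x S y] by blast
    then show ?thesis unfolding pairs_def by blast
  qed
  with S SE that show thesis by blast
qed

section \<open>Colourable graphs\<close>

lemma colorable_imp_large_color_class:
  assumes "colorable n E k" and k: "1 \<le> k"
  obtains C where "C \<subseteq> {1..n}" "n \<le> k * card C" "pairs C \<inter> E = {}"
proof -
  obtain f :: "nat \<Rightarrow> nat" where f: "\<forall>v\<in>{1..n}. f v < k" "\<forall>x y. {x, y} \<in> E \<longrightarrow> f x \<noteq> f y"
    using assms(1) unfolding colorable_def by blast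
  define color_class where "color_class j = {v\<in>{1..n}. f v = j}" for j
  have "(\<Union>j<k. color_class j) = {1..n}" using f(1) by (auto simp: color_class_def)
  then have "n = card (\<Union>j<k. color_class j)" by simp
  also have "\<dots> \<le> (\<Sum>j<k. card (color_class j))" by (rule card_UN_le) simp
  finally have n: "n \<le> (\<Sum>j<k. card (color_class j))" .
  have "\<exists>j<k. n \<le> k * card (color_class j)"
  proof (rule ccontr)
    assume "\<not> (\<exists>j<k. n \<le> k * card (color_class j))"
    then have "(\<Sum>j<k. k * card (color_class j)) < (\<Sum>j<k. n)"
      using k by (intro sum_strict_mono) (auto simp: lessThan_empty_iff)
    then have "k * (\<Sum>j<k. card (color_class j)) < k * n" by (simp add: sum_distrib_left)
    with n show False by (meson leD mult_le_mono2)
  qed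
  then obtain j where j: "n \<le> k * card (color_class j)" by blast
  have "pairs (color_class j) \<inter> E = {}"
    using f(2) unfolding pairs_def color_class_def card_2_iff by fastforce
  moreover have "color_class j \<subseteq> {1..n}" by (auto simp: color_class_def)
  ultimately show thesis using j that by blast
qed

lemma choose_two_le_of_le_mult:
  assumes k: "1 \<le> k" and n: "2 * k \<le> n" and a: "n \<le> k * a"
  shows "real (n choose 2) \<le> 2 * real k ^ 2 * real (a choose 2)"
proof -
  have a': "real n \<le> real k * real a" using a by (metis of_nat_le_iff of_nat_mult)
  have n': "2 * real k \<le> real n" using n by (metis of_nat_le_iff of_nat_mult of_nat_numeral)
  have "0 \<le> real n * (real n - 2 * real k + 1)" using n' by simp
  then have "real n * (real n - 1) \<le> 2 * (real n * (real n - real k))" by (simp add: algebra_simps)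
  also have "\<dots> \<le> 2 * ((real k * real a) * (real k * real a - real k))"
    using a' n' k by (intro mult_left_mono mult_mono) auto
  finally show ?thesis
    unfolding real_choose_two by (simp add: power2_eq_square field_simps)
qed

lemma card_subsets_avoiding_large_clique:
  assumes k: "1 \<le> k" and n: "2 * k \<le> n" and C: "C \<subseteq> {1..n}" "n \<le> k * card C"
  shows "real (card {E. E \<subseteq> pairs {1..n} - pairs C \<and> card E = m})
           \<le> real ((n choose 2) choose m) * (1 - 1 / (2 * real k ^ 2)) ^ m"
proof -
  define A where "A = card (pairs {1..n} - pairs C)"
  have C_fin: "finite C" using C(1) finite_subset by blast
  have A: "A = (n choose 2) - (card C choose 2)" and le: "card C choose 2 \<le> n choose 2"
    using card_Diff_subset[OF finite_pairs[OF C_fin] pairs_mono[OF C(1)]]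
      card_mono[OF finite_pairs pairs_mono[OF C(1)]]
    by (simp_all add: A_def card_pairs C_fin)
  have "real (n choose 2) \<le> 2 * real k ^ 2 * real (card C choose 2)"
    using k n C(2) by (rule choose_two_le_of_le_mult)
  then have "real A \<le> (1 - 1 / (2 * real k ^ 2)) * real (n choose 2)"
    using A le k by (simp add: of_nat_diff field_simps)
  then have "real (A choose m) \<le> real ((n choose 2) choose m) * (1 - 1 / (2 * real k ^ 2)) ^ m"
    using A k n by (intro binomial_le_power_ratio) auto
  then show ?thesis by (simp add: A_def n_subsets finite_pairs)
qed

lemma colorable_family_upper_bound:
  assumes k: "1 \<le> k" and n: "2 * k \<le> n"
  shows "real (card (colorable_family n m k))
           \<le> 2 ^ n * real ((n choose 2) choose m) * (1 - 1 / (2 * real k ^ 2)) ^ m"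
proof -
  define Cs where "Cs = {C. C \<subseteq> {1..n} \<and> n \<le> k * card C}"
  define avoiding where "avoiding C = {E. E \<subseteq> pairs {1..n} - pairs C \<and> card E = m}" for C
  have Cs_fin: "finite Cs" unfolding Cs_def by simp
  have "card Cs \<le> card (Pow {1..n})" unfolding Cs_def by (intro card_mono) auto
  then have card_Cs: "card Cs \<le> 2 ^ n" by (simp add: card_Pow)
  have "colorable_family n m k \<subseteq> (\<Union>C\<in>Cs. avoiding C)"
  proof
    fix E assume "E \<in> colorable_family n m k"
    then have E: "E \<subseteq> pairs {1..n}" "card E = m" "colorable n E k"
      unfolding colorable_family_def graphs_on_iff_subset_pairs by auto
    from E(3) k obtain C where "C \<subseteq> {1..n}" "n \<le> k * card C" "pairs C \<inter> E = {}"
      by (rule colorable_imp_large_color_class)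
    with E show "E \<in> (\<Union>C\<in>Cs. avoiding C)" unfolding Cs_def avoiding_def by blast
  qed
  moreover have "finite (\<Union>C\<in>Cs. avoiding C)"
    using Cs_fin finite_pairs[of "{1..n}"] by (auto simp: avoiding_def intro: finite_subset[of _ "Pow (pairs {1..n})"])
  ultimately have "card (colorable_family n m k) \<le> card (\<Union>C\<in>Cs. avoiding C)"
    by (simp add: card_mono)
  also have "\<dots> \<le> (\<Sum>C\<in>Cs. card (avoiding C))" using Cs_fin by (rule card_UN_le)
  finally have "card (colorable_family n m k) \<le> (\<Sum>C\<in>Cs. card (avoiding C))" .
  then have "real (card (colorable_family n m k)) \<le> (\<Sum>C\<in>Cs. real (card (avoiding C)))"
    by (metis of_nat_le_iff of_nat_sum)
  also have "\<dots> \<le> (\<Sum>C\<in>Cs. real ((n choose 2) choose m) * (1 - 1 / (2 * real k ^ 2)) ^ m)"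
    unfolding avoiding_def Cs_def using card_subsets_avoiding_large_clique[OF k n]
    by (intro sum_mono) blast
  also have "\<dots> \<le> 2 ^ n * (real ((n choose 2) choose m) * (1 - 1 / (2 * real k ^ 2)) ^ m)"
  proof -
    have "1 \<le> real k ^ 2" using k by (simp add: one_le_power)
    then have "1 / (2 * real k ^ 2) \<le> 1" by (simp add: divide_le_eq)
    then show ?thesis using card_Cs
      by (simp add: mult_right_mono of_nat_le_numeral_power_cancel_iff)
  qed
  finally show ?thesis by (simp add: mult.assoc)
qed

lemma colorable_family_nonempty:
  assumes k: "2 \<le> k" and n: "2 \<le> n" and m: "real m \<le> real n ^ 2 / 8"
  shows "0 < card (colorable_family n m k)"
proof -
  define h where "h = n div 2"
  define bipartite where "bipartite = (\<lambda>(x, y). {x, y}) ` ({1..h} \<times> {h+1..n})"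
  have "inj_on (\<lambda>(x, y). {x, y}) ({1..h} \<times> {h+1..n})"
    by (rule inj_onI) (auto simp: doubleton_eq_iff)
  then have card_bipartite: "card bipartite = h * (n - h)"
    unfolding bipartite_def by (simp add: card_image card_cartesian_product)
  have "real n ^ 2 / 8 \<le> ((real n - 1) / 2) * (real n / 2)"
    using n by (simp add: power2_eq_square field_simps)
  also have "\<dots> \<le> real h * real (n - h)"
  proof -
    have "real n - 1 \<le> 2 * real h" "real n \<le> 2 * real (n - h)" unfolding h_def by linarith+
    then show ?thesis using n by (intro mult_mono) auto
  qed
  finally have "m \<le> card bipartite" using m card_bipartite by (metis of_nat_le_iff of_nat_mult order_trans)
  then obtain E where E: "E \<subseteq> bipartite" "card E = m" by (meson obtain_subset_with_card_n)
  have "bipartite \<subseteq> pairs {1..n}" unfolding bipartite_def h_def pairs_def by auto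
  moreover have "colorable n E k"
    unfolding colorable_def
  proof (intro exI[of _ "\<lambda>v. if v \<le> h then 0 else 1"] conjI allI impI ballI)
    fix x y assume "{x, y} \<in> E"
    with E(1) have "{x, y} \<in> bipartite" by blast
    then obtain a b where "a \<le> h" "h + 1 \<le> b" "{x, y} = {a, b}" unfolding bipartite_def by auto
    then show "(if x \<le> h then 0 else 1) \<noteq> (if y \<le> h then 0 else 1 :: nat)"
      by (auto simp: doubleton_eq_iff)
  qed (use k in auto)
  ultimately have "E \<in> colorable_family n m k"
    using E unfolding colorable_family_def graphs_on_iff_subset_pairs by auto
  moreover have "finite (colorable_family n m k)"
    by (rule finite_subset[of _ "Pow (pairs {1..n})"])
      (auto simp: colorable_family_def graphs_on_iff_subset_pairs finite_pairs)
  ultimately show ?thesis using card_gt_0_iff by blast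
qed

section \<open>Graphs without large cliques\<close>

lemma Kfree_family_deletion_bound:
  assumes r: "1 \<le> r" and s: "s = (r + 1) choose 2" "s \<le> m + L" and mL: "m + L \<le> n choose 2"
    and markov: "2 * (n choose (r + 1)) * (((n choose 2) - s) choose (m + L - s))
                   \<le> (L + 1) * ((n choose 2) choose (m + L))"
  shows "(n choose 2) choose (m + L) \<le> 2 * card (Kfree_family n m r) * (((n choose 2) - m) choose L)"
proof -
  define Ks where "Ks = pairs ` {S. S \<subseteq> {1..n} \<and> card S = r + 1}"
  have card_P: "card (pairs {1..n}) = n choose 2" by (simp add: card_pairs)
  have "card Ks \<le> card {S. S \<subseteq> {1..n} \<and> card S = r + 1}"
    unfolding Ks_def by (rule card_image_le) simp
  also have "\<dots> = n choose (r + 1)" using n_subsets[of "{1..n}" "r + 1"] by simp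
  finally have card_Ks: "card Ks \<le> n choose (r + 1)" .
  have Ks: "K \<subseteq> pairs {1..n} \<and> card K = s" if K: "K \<in> Ks" for K
  proof -
    obtain S where S: "S \<subseteq> {1..n}" "card S = r + 1" "K = pairs S" using K unfolding Ks_def by blast
    then have "finite S" by (meson finite_atLeastAtMost finite_subset)
    with S s(1) show ?thesis by (simp add: card_pairs pairs_mono)
  qed
  have "2 * card Ks * ((card (pairs {1..n}) - s) choose (m + L - s))
          \<le> (L + 1) * (card (pairs {1..n}) choose (m + L))"
    unfolding card_P using markov card_Ks by (meson le_trans mult_le_mono1 mult_le_mono2 order_refl)
  moreover have "1 \<le> s" using s(1) r by (simp add: Suc_le_eq)
  ultimately have "(n choose 2) choose (m + L)
      \<le> 2 * card {F. F \<subseteq> pairs {1..n} \<and> card F = m \<and> (\<forall>K\<in>Ks. \<not> K \<subseteq> F)} * (((n choose 2) - m) choose L)"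
    using choose_le_card_subsets_avoiding[OF finite_pairs Ks] s(2) card_P by fastforce
  also have "card {F. F \<subseteq> pairs {1..n} \<and> card F = m \<and> (\<forall>K\<in>Ks. \<not> K \<subseteq> F)}
      \<le> card (Kfree_family n m r)"
  proof (rule card_mono)
    show "finite (Kfree_family n m r)"
      by (rule finite_subset[of _ "Pow (pairs {1..n})"])
         (auto simp: Kfree_family_def graphs_on_iff_subset_pairs finite_pairs)
    show "{F. F \<subseteq> pairs {1..n} \<and> card F = m \<and> (\<forall>K\<in>Ks. \<not> K \<subseteq> F)} \<subseteq> Kfree_family n m r"
    proof
      fix F assume F: "F \<in> {F. F \<subseteq> pairs {1..n} \<and> card F = m \<and> (\<forall>K\<in>Ks. \<not> K \<subseteq> F)}"
      have "\<not> has_clique F (r + 1)"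
      proof
        assume "has_clique F (r + 1)"
        with F r obtain S where "S \<subseteq> {1..n}" "card S = r + 1" "pairs S \<subseteq> F"
          using has_clique_imp_pairs_subset[of F n r] by blast
        with F show False unfolding Ks_def by blast
      qed
      with F show "F \<in> Kfree_family n m r"
        unfolding Kfree_family_def graphs_on_iff_subset_pairs by simp
    qed
  qed
  finally show ?thesis by simp
qed

lemma clique_edges_exponent:
  assumes s: "s = (r + 1) choose 2" and r: "2 \<le> r"
  shows "3 \<le> s" and "r + 1 \<le> 2 * s"
    and "real (s - 1) * (2 - 2 / (real r + 2)) = real (2 * s - r - 1)"
proof -
  have rs: "2 * real s = (real r + 1) * real r"
    using real_choose_two[of "r + 1"] s by (simp add: field_simps add.commute)
  have "(real r + 1) * 2 \<le> (real r + 1) * real r" using r by (intro mult_left_mono) auto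
  then have "real r + 1 \<le> real s" using rs by simp
  then show "3 \<le> s" and "r + 1 \<le> 2 * s" using r by linarith+
  then show "real (s - 1) * (2 - 2 / (real r + 2)) = real (2 * s - r - 1)"
    using rs by (simp add: of_nat_diff field_simps)
qed

text \<open>With \<open>s\<close> the number of edges of \<open>K_(r+1)\<close> and \<open>M \<approx> m\<close>, the left-hand side is roughly the
  expected number of copies of \<open>K_(r+1)\<close> in a random graph with \<open>M\<close> edges; the exponent
  \<open>2 - 2 / (r + 2)\<close> is exactly what makes it at most a fraction of \<open>m\<close>.\<close>

lemma expected_cliques_le:
  assumes r: "2 \<le> r" and s: "s = (r + 1) choose 2" and n: "2 \<le> n" and q: "1 \<le> q"
    and d: "d = 1 / (2 * real q * 8 ^ s)" and m: "real m \<le> d * real n powr (2 - 2 / (real r + 2))"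
    and M: "M \<le> 2 * m"
  shows "2 * real n ^ (r + 1) * (real M / real (n choose 2)) ^ s \<le> real m / real q"
proof -
  have s3: "3 \<le> s" and rs: "r + 1 \<le> 2 * s" using clique_edges_exponent[OF s r] by auto
  have "(1::real) \<le> 2 * 8 ^ s" using one_le_power[of "8::real" s] by linarith
  then have "1 \<le> real q * (2 * 8 ^ s)" using q mult_mono[of 1 "real q" 1 "2 * 8 ^ s"] by simp
  then have d01: "0 \<le> d" "d \<le> 1" unfolding d by (auto simp: field_simps)
  have "real m ^ (s - 1) \<le> (d * real n powr (2 - 2 / (real r + 2))) ^ (s - 1)"
    using m by (intro power_mono) auto
  also have "\<dots> = d ^ (s - 1) * real n powr (real (s - 1) * (2 - 2 / (real r + 2)))"
    using n by (simp add: power_mult_distrib powr_power)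
  also have "\<dots> = d ^ (s - 1) * real n ^ (2 * s - r - 1)"
    using n by (simp only: clique_edges_exponent(3)[OF s r]) (simp add: powr_realpow)
  also have "\<dots> \<le> d * real n ^ (2 * s - r - 1)"
    using d01 s3 power_decreasing[of 1 "s - 1" d] by (intro mult_right_mono) auto
  finally have "real m * real m ^ (s - 1) \<le> real m * (d * real n ^ (2 * s - r - 1))"
    by (rule mult_left_mono) simp
  then have ms: "real m ^ s \<le> d * real m * real n ^ (2 * s - r - 1)"
    using s3 by (simp add: power_eq_if[of _ s] mult.left_commute)
  have N: "real n ^ 2 / 4 \<le> real (n choose 2)" using n by (rule choose_two_ge_quarter_square)
  have "real M / real (n choose 2) \<le> 2 * real m / (real n ^ 2 / 4)"
    using M N n by (intro frac_le) auto
  then have "(real M / real (n choose 2)) ^ s \<le> (8 * real m / real n ^ 2) ^ s"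
    by (intro power_mono) auto
  also have "\<dots> = 8 ^ s * real m ^ s / real n ^ (2 * s)"
    by (simp add: power_mult_distrib power_divide power_mult)
  finally have "2 * real n ^ (r + 1) * (real M / real (n choose 2)) ^ s
               \<le> 2 * real n ^ (r + 1) * (8 ^ s * (d * real m * real n ^ (2 * s - r - 1)) / real n ^ (2 * s))"
    using ms by (smt (verit) divide_right_mono mult_left_mono zero_le_power of_nat_0_le_iff)
  also have "\<dots> = 2 * 8 ^ s * d * real m * (real n ^ (r + 1 + (2 * s - r - 1)) / real n ^ (2 * s))"
    by (simp add: power_add)
  also have "\<dots> = real m / real q" using rs n q unfolding d by simp
  finally show ?thesis .
qed

lemma deletion_condition:
  assumes r: "2 \<le> r" and s: "s = (r + 1) choose 2" and n: "2 \<le> n" and q: "1 \<le> q"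
    and d: "d = 1 / (2 * real q * 8 ^ s)" and m: "real m \<le> d * real n powr (2 - 2 / (real r + 2))"
    and L: "L \<le> m" "m < (L + 1) * q" and M: "s \<le> m + L" "m + L \<le> n choose 2"
  shows "2 * (n choose (r + 1)) * (((n choose 2) - s) choose (m + L - s))
           \<le> (L + 1) * ((n choose 2) choose (m + L))"
proof -
  define N where "N = n choose 2"
  have "n choose (r + 1) \<le> n ^ (r + 1)"
    by (cases "r + 1 \<le> n") (use binomial_le_pow[of "r + 1" n] in \<open>simp_all add: binomial_eq_0\<close>)
  then have "real (n choose (r + 1)) \<le> real n ^ (r + 1)" by (metis of_nat_le_iff of_nat_power)
  then have "real (2 * (n choose (r + 1)) * ((N - s) choose (m + L - s)))
               \<le> 2 * real n ^ (r + 1) * (real (N choose (m + L)) * (real (m + L) / real N) ^ s)"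
    using M n unfolding N_def
    by (simp only: of_nat_mult, intro mult_mono binomial_supersets_le) auto
  also have "\<dots> = (2 * real n ^ (r + 1) * (real (m + L) / real N) ^ s) * real (N choose (m + L))"
    by simp
  also have "\<dots> \<le> real m / real q * real (N choose (m + L))"
    using expected_cliques_le[OF r s n q d m, of "m + L"] L(1) unfolding N_def
    by (intro mult_right_mono) auto
  also have "\<dots> \<le> real (L + 1) * real (N choose (m + L))"
  proof (intro mult_right_mono)
    have "real m \<le> real ((L + 1) * q)" using L(2) by (simp only: of_nat_le_iff less_imp_le)
    then show "real m / real q \<le> real (L + 1)" using q by (simp add: divide_le_eq algebra_simps)
  qed simp
  finally show ?thesis unfolding N_def by (simp only: of_nat_mult[symmetric] of_nat_le_iff)
qed

lemma Kfree_family_lower_bound: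
  assumes r: "2 \<le> r" and s: "s = (r + 1) choose 2" and n: "2 \<le> n" and q: "1 \<le> q"
    and d: "d = 1 / (2 * real q * 8 ^ s)" and m: "real m \<le> d * real n powr (2 - 2 / (real r + 2))"
    and L: "L \<le> m" "m < (L + 1) * q" and M: "s \<le> m + L" "m + L \<le> n choose 2"
  shows "(n choose 2) choose m \<le> 2 * card (Kfree_family n m r) * ((m + L) choose L)"
  using M(2)
proof (rule choose_le_of_choose_add_le)
  show "(n choose 2) choose (m + L) \<le> 2 * card (Kfree_family n m r) * ((n choose 2) - m choose L)"
    using Kfree_family_deletion_bound[OF _ s M] deletion_condition[OF assms] r by simp
qed

lemma edge_count_le_square_div_16:
  assumes r: "2 \<le> r" and s: "s = (r + 1) choose 2" and n: "1 \<le> n" and q: "1 \<le> q"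
    and d: "d = 1 / (2 * real q * 8 ^ s)" and m: "real m \<le> d * real n powr (2 - 2 / (real r + 2))"
  shows "real m \<le> real n ^ 2 / 16"
proof -
  have "(8::real) ^ 1 \<le> 8 ^ s" using clique_edges_exponent(1)[OF s r] by (intro power_increasing) auto
  with q have "16 \<le> 2 * real q * 8 ^ s" using mult_mono[of 2 "2 * real q" 8 "8 ^ s"] by simp
  then have d16: "0 \<le> d" "d \<le> 1 / 16" unfolding d by (auto simp: field_simps)
  have "real n powr (2 - 2 / (real r + 2)) \<le> real n ^ 2"
    using n powr_mono[of "2 - 2 / (real r + 2)" 2 "real n"] by (simp add: powr_numeral)
  then have "real m \<le> d * real n ^ 2" using m d16 by (meson mult_left_mono order_trans)
  also have "\<dots> \<le> real n ^ 2 / 16" using mult_right_mono[OF d16(2), of "real n ^ 2"] by simp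
  finally show ?thesis .
qed

lemma div_mult_bounds:
  fixes m q :: nat
  assumes q: "1 \<le> q" "q \<le> m"
  shows "1 \<le> m div q" "m div q * q \<le> m" "m < (m div q + 1) * q" "m + m div q \<le> 3 * q * (m div q)"
proof -
  show L: "1 \<le> m div q" using q by (simp add: div_greater_zero_iff Suc_le_eq)
  show "m div q * q \<le> m" by simp
  have "m div q * q + m mod q = m" "m mod q < q" "(m div q + 1) * q = m div q * q + q"
    using q by simp_all
  then show less: "m < (m div q + 1) * q" by linarith
  have "m div q \<le> q * (m div q)" "q \<le> q * (m div q)" "m < q + q * (m div q)"
    using q(1) L less by (simp_all add: algebra_simps)
  then have "m + m div q \<le> 3 * (q * (m div q))" by linarith
  then show "m + m div q \<le> 3 * q * (m div q)" by (simp add: mult.assoc)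
qed

text \<open>The value \<open>q = 576 k^4\<close> makes \<open>ln (9 q) \<le> q / (4 k^2)\<close>, hence
  \<open>((m + L) choose L) \<le> (9 q)^L \<le> exp (m / (4 k^2))\<close>.\<close>

lemma deletion_loss_le_coloring_gain:
  fixes k q m n L :: nat
  assumes k: "2 \<le> k" and q: "q = 576 * k ^ 4" and L: "real L * real q \<le> real m"
    and mL: "real (m + L) \<le> 3 * real q * real L" and m: "12 * real k ^ 2 * real n \<le> real m"
  shows "2 * real n * real ((m + L) choose L) * 2 ^ n * (1 - 1 / (2 * real k ^ 2)) ^ m \<le> 1"
proof -
  define K where "K = real k ^ 2"
  have K: "4 \<le> K" unfolding K_def using k power_mono[of 2 "real k" 2] by simp
  have qK: "real q = 576 * K ^ 2" unfolding q K_def by (simp add: power_mult[symmetric])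
  have "ln (9 * real q) = 2 * ln (72 * K)"
    using K ln_realpow[of "72 * K" 2] unfolding qK by (simp add: power2_eq_square)
  also have "\<dots> \<le> 144 * K" using ln_less_self[of "72 * K"] K by (simp add: less_imp_le)
  finally have ln_q: "ln (9 * real q) \<le> 144 * K" .
  have "real ((m + L) choose L) \<le> (exp 1 * (3 * real q)) ^ L"
    using mL by (intro binomial_le_exp_mult_power) simp
  also have "\<dots> \<le> (9 * real q) ^ L"
    using exp_le mult_right_mono[of "exp 1" 3 "3 * real q"] by (intro power_mono) auto
  also have "\<dots> = exp (real L * ln (9 * real q))" using qK K by (simp add: exp_of_nat_mult)
  also have "\<dots> \<le> exp (real m / (4 * K))"
  proof -
    have "1 \<le> real q" using qK K power_mono[of 4 K 2] by simp
    then have "real L * ln (9 * real q) \<le> (real m / real q) * (144 * K)"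
      using L ln_q by (intro mult_mono) (auto simp: field_simps)
    also have "\<dots> = real m / (4 * K)" unfolding qK using K by (simp add: field_simps power2_eq_square)
    finally show ?thesis by simp
  qed
  finally have binomial: "real ((m + L) choose L) \<le> exp (real m / (4 * K))" .
  have \<beta>: "0 \<le> 1 - 1 / (2 * K)" using K by (simp add: field_simps)
  have "(1 - 1 / (2 * K)) ^ m \<le> exp (- (1 / (2 * K))) ^ m"
    using \<beta> exp_ge_add_one_self[of "- (1 / (2 * K))"] by (intro power_mono) auto
  also have "\<dots> = exp (- (real m / (2 * K)))" by (simp add: exp_of_nat_mult[symmetric])
  finally have power: "(1 - 1 / (2 * K)) ^ m \<le> exp (- (real m / (2 * K)))" .
  have "(2::real) ^ n \<le> exp 1 ^ n"
    using exp_ge_add_one_self[of 1] by (intro power_mono) auto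
  then have two: "(2::real) ^ n \<le> exp (real n)" by (simp add: exp_of_nat_mult[symmetric])
  have "2 * real n * real ((m + L) choose L) * 2 ^ n * (1 - 1 / (2 * K)) ^ m
      \<le> 2 * real n * exp (real m / (4 * K)) * exp (real n) * exp (- (real m / (2 * K)))"
    using \<beta> by (intro mult_mono binomial two power) auto
  also have "\<dots> = 2 * real n * exp (real n - real m / (4 * K))"
    by (simp add: exp_add[symmetric] exp_diff field_simps)
  also have "\<dots> \<le> 2 * real n * exp (- (2 * real n))"
    using m K unfolding K_def[symmetric] by (intro mult_left_mono) (auto simp: field_simps)
  also have "\<dots> \<le> 1"
  proof -
    have "2 * real n \<le> exp (2 * real n)" using exp_ge_add_one_self[of "2 * real n"] by linarith
    then show ?thesis by (simp add: exp_minus field_simps)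
  qed
  finally show ?thesis unfolding K_def .
qed

lemma Kfree_colorable_ratio_ge:
  fixes r k n m s q :: nat and d :: real
  assumes r: "2 \<le> r" and k: "2 \<le> k" and s: "s = (r + 1) choose 2" and q: "q = 576 * k ^ 4"
    and d: "d = 1 / (2 * real q * 8 ^ s)" and n: "q \<le> n" "s \<le> n"
    and m: "12 * real k ^ 2 * real n \<le> real m" "real m \<le> d * real n powr (2 - 2 / (real r + 2))"
  shows "real n \<le> real (card (Kfree_family n m r)) / real (card (colorable_family n m k))"
proof -
  define N where "N = n choose 2"
  define L where "L = m div q"
  define \<beta> where "\<beta> = 1 - 1 / (2 * real k ^ 2)"
  have "2 * k \<le> q" using k q self_le_power[of k 4] by simp
  with k n have q1: "1 \<le> q" and n2: "2 \<le> n" and n2k: "2 * k \<le> n" by simp_all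
  have "1 \<le> real k ^ 2" using k by (simp add: one_le_power)
  then have "1 * real n \<le> 12 * real k ^ 2 * real n" by (intro mult_right_mono) auto
  with m(1) have "n \<le> m" by linarith
  with n have "q \<le> m" by simp
  have L: "1 \<le> L" "L * q \<le> m" "m < (L + 1) * q" "m + L \<le> 3 * q * L"
    unfolding L_def using div_mult_bounds[OF q1 \<open>q \<le> m\<close>] by blast+
  have "L \<le> m" using L(2) q1 by (metis le_trans mult.right_neutral mult_le_mono2)
  have m16: "real m \<le> real n ^ 2 / 16" using n2 by (intro edge_count_le_square_div_16[OF r s _ q1 d m(2)]) simp
  have "real (m + L) \<le> real n ^ 2 / 4" using m16 \<open>L \<le> m\<close> by simp
  then have mL: "m + L \<le> N" unfolding N_def using choose_two_ge_quarter_square[OF n2] by linarith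
  have sL: "s \<le> m + L" using n \<open>n \<le> m\<close> by simp
  have lower: "N choose m \<le> 2 * card (Kfree_family n m r) * ((m + L) choose L)"
    using Kfree_family_lower_bound[OF r s n2 q1 d m(2) \<open>L \<le> m\<close> L(3) sL] mL unfolding N_def .
  have upper: "real (card (colorable_family n m k)) \<le> 2 ^ n * real (N choose m) * \<beta> ^ m"
    unfolding N_def \<beta>_def using k n2k by (intro colorable_family_upper_bound) auto
  have colorable: "0 < card (colorable_family n m k)"
    using k n2 m16 by (intro colorable_family_nonempty) auto
  have gain: "2 * real n * real ((m + L) choose L) * 2 ^ n * \<beta> ^ m \<le> 1"
    unfolding \<beta>_def using of_nat_mono[OF L(2), where 'a = real] of_nat_mono[OF L(4), where 'a = real] m(1)
    by (intro deletion_loss_le_coloring_gain[OF k q]) simp_all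
  have "0 \<le> \<beta>" unfolding \<beta>_def using \<open>1 \<le> real k ^ 2\<close> by (simp add: divide_le_eq)
  have lower': "real (N choose m) \<le> 2 * real (card (Kfree_family n m r)) * real ((m + L) choose L)"
    using of_nat_mono[OF lower, where 'a = real] by simp
  have "real n * real (card (colorable_family n m k)) \<le> real n * (2 ^ n * real (N choose m) * \<beta> ^ m)"
    using upper by (rule mult_left_mono) simp
  also have "\<dots> \<le> real n * (2 ^ n * (2 * real (card (Kfree_family n m r)) * real ((m + L) choose L)) * \<beta> ^ m)"
    using lower' \<open>0 \<le> \<beta>\<close> by (intro mult_left_mono mult_right_mono) auto
  also have "\<dots> = real (card (Kfree_family n m r)) * (2 * real n * real ((m + L) choose L) * 2 ^ n * \<beta> ^ m)"
    by (simp add: algebra_simps)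
  also have "\<dots> \<le> real (card (Kfree_family n m r))" using gain by (simp add: mult_left_le)
  finally show ?thesis using colorable by (simp add: pos_le_divide_eq)
qed

theorem lemma5p1:
  fixes r k :: nat
  assumes "r \<ge> 2" and "k \<ge> 2"
  shows "\<exists>c d :: real. c > 0 \<and> d > 0 \<and>
    (\<forall>m :: nat \<Rightarrow> nat.
      (\<forall>\<^sub>F n in sequentially. c * real n \<le> real (m n) \<and>
           real (m n) \<le> d * real n powr (2 - 2 / (real r + 2))) \<longrightarrow>
      filterlim (\<lambda>n. real (card (Kfree_family n (m n) r)) /
                     real (card (colorable_family n (m n) k))) at_top sequentially)"
proof -
  define s where "s = (r + 1) choose 2"
  define q where "q = 576 * k ^ 4"
  define d where "d = 1 / (2 * real q * 8 ^ s)"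
  define c where "c = 12 * real k ^ 2"
  have "c > 0" "d > 0" using assms by (simp_all add: c_def d_def q_def)
  moreover have "filterlim (\<lambda>n. real (card (Kfree_family n (m n) r)) /
                     real (card (colorable_family n (m n) k))) at_top sequentially"
    if m: "\<forall>\<^sub>F n in sequentially. c * real n \<le> real (m n) \<and>
             real (m n) \<le> d * real n powr (2 - 2 / (real r + 2))" for m :: "nat \<Rightarrow> nat"
  proof (rule filterlim_at_top_mono[OF filterlim_real_sequentially])
    show "\<forall>\<^sub>F n in sequentially. real n \<le> real (card (Kfree_family n (m n) r)) /
                     real (card (colorable_family n (m n) k))"
      using m eventually_ge_at_top[of "max q s"]
      by eventually_elim (use Kfree_colorable_ratio_ge[OF assms s_def q_def d_def] in \<open>auto simp: c_def\<close>)
  qed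
  ultimately show ?thesis by blast
qed

end
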